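(* Let $n\ge 2$, let $A\in\mathbb{R}^{n\times n}$ be symmetric with zero diagonal, let $\lambda\ge\max_i\sum_j|A_{ij}|$, and let $v^*\in\mathbb{R}^{n-1}$ with $v^*_i=A_{ni}$. Let $w^*=\Pi^{n-1}_{B\to\Delta}(v^* )\in\Delta(\lambda,2n-1)$. Then $\nabla\widetilde S(w^* )=0$ and $w^*$ is a global minimizer of $\widetilde S$ over $\Delta(\lambda,2n-1)$.
   Context: Ising model $\mathcal{D}(A,\theta)$ on $\{-1,1\}^n$: $\Pr[Z=z]\propto\exp\big(\sum_{i<j}A_{ij}z_iz_j+\sum_i\theta_iz_i\big)$, $A$ symmetric with zero diagonal. $\mathsf{B}(W,k)=\{x\in\mathbb{R}^k:\|x\|_1\le W\}$, $\Delta(W,k)=\{x\in\mathbb{R}^k:x\ge0,\sum_ix_i=W\}$. Maps: $\Pi^k_{B\to\Delta}:\mathsf{B}(W,k)\to\Delta(W,2k+1)$ with $\Pi^k_{B\to\Delta}(x)_{2k+1}=W-\|x\|_1$, $\Pi^k_{B\to\Delta}(x)_i=\max(x_i,0)$ and $\Pi^k_{B\to\Delta}(x)_{k+i}=\max(-x_i,0)$ for $i\in[k]$; $\Pi^k_{\Delta\to B}:\Delta(W,2k+1)\to\mathsf{B}(W,k)$ with $\Pi^k_{\Delta\to B}(u)_i=u_i-u_{i+k}$, $i\in[k]$. Simplex ISO: for $w\in\mathbb{R}^{2n-1}$, $\widetilde S(w)=\mathbb{E}_{Z\sim\mathcal{D}(A,0)}\big[\exp\big(-\sum_{j=1}^{n-1}(w_j-w_{n-1+j})Z_nZ_j\big)\big]$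 (which equals $S(\Pi^{n-1}_{\Delta\to B}(w))$ for the ISO $S(v)=\mathbb{E}[\exp(-\sum_{j=1}^{n-1}v_jZ_nZ_j)]$). *)

theory Defs
  imports "HOL-Analysis.Analysis"
begin

text \<open>Vectors in R^k are represented as functions nat => real, indexed by 1..k
  and extensional (zero outside 1..k). Matrices are nat => nat => real, indexed 1..n.\<close>

definition spins :: "nat \<Rightarrow> (nat \<Rightarrow> real) set" where
  "spins n = PiE {1..n} (\<lambda>_. {-1, 1})"

definition ising_weight :: "nat \<Rightarrow> (nat \<Rightarrow> nat \<Rightarrow> real) \<Rightarrow> (nat \<Rightarrow> real) \<Rightarrow> (nat \<Rightarrow> real) \<Rightarrow> real" where
  "ising_weight n A \<theta> z =
     exp ((\<Sum>i\<in>{1..n}. \<Sum>j\<in>{i<..n}. A i j * z i * z j) + (\<Sum>i\<in>{1..n}. \<theta> i * z i))"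

definition ising_expect :: "nat \<Rightarrow> (nat \<Rightarrow> nat \<Rightarrow> real) \<Rightarrow> (nat \<Rightarrow> real) \<Rightarrow> ((nat \<Rightarrow> real) \<Rightarrow> real) \<Rightarrow> real" where
  "ising_expect n A \<theta> f =
     (\<Sum>z\<in>spins n. ising_weight n A \<theta> z * f z) / (\<Sum>z\<in>spins n. ising_weight n A \<theta> z)"

definition simplexW :: "real \<Rightarrow> nat \<Rightarrow> (nat \<Rightarrow> real) set" where
  "simplexW W k = {x. (\<forall>i\<in>{1..k}. 0 \<le> x i) \<and> (\<Sum>i\<in>{1..k}. x i) = W \<and> (\<forall>i. i \<notin> {1..k} \<longrightarrow> x i = 0)}"

definition Pi_B_Delta :: "nat \<Rightarrow> real \<Rightarrow> (nat \<Rightarrow> real) \<Rightarrow> (nat \<Rightarrow> real)" where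
  "Pi_B_Delta k W x = (\<lambda>i.
     if 1 \<le> i \<and> i \<le> k then max (x i) 0
     else if k < i \<and> i \<le> 2*k then max (- x (i - k)) 0
     else if i = 2*k + 1 then W - (\<Sum>j\<in>{1..k}. \<bar>x j\<bar>)
     else 0)"

definition simplex_ISO :: "nat \<Rightarrow> (nat \<Rightarrow> nat \<Rightarrow> real) \<Rightarrow> (nat \<Rightarrow> real) \<Rightarrow> real" where
  "simplex_ISO n A w =
     ising_expect n A (\<lambda>_. 0)
       (\<lambda>z. exp (- (\<Sum>j\<in>{1..n-1}. (w j - w (n - 1 + j)) * z n * z j)))"

end

theory Submission
  imports Defs
begin

text \<open>With \<open>m = n - 1\<close> and \<open>v j = w j - w (m + j)\<close>, the simplex ISO at \<open>w\<close> is the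
  ISO \<open>S(v) = E[exp(-\<Sum>j. v j Z\<^sub>n Z\<^sub>j)]\<close>. At \<open>v = v*\<close> the exponent cancels every coupling
  of \<open>Z\<^sub>n\<close> in the Ising energy, so the tilted weight does not depend on \<open>Z\<^sub>n\<close>; flipping
  \<open>Z\<^sub>n\<close> shows \<open>E[exp(-\<Sum>j. v*\<^sub>j Z\<^sub>n Z\<^sub>j) Z\<^sub>n Z\<^sub>k] = 0\<close>. This expectation is the gradient of
  \<open>S\<close> at \<open>v*\<close>, so all partial derivatives of the simplex ISO vanish at \<open>w*\<close>; and since
  \<open>exp\<close> lies above its tangents, \<open>S(v) \<ge> S(v*) + \<nabla>S(v*)\<cdot>(v - v*) = S(v*)\<close> for every \<open>v\<close>.
  Finally \<open>w*\<close> lies in the simplex because the \<open>n\<close>-th row of \<open>|A|\<close> sums to at most \<open>\<lambda>\<close>.\<close>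

definition ISO :: "nat \<Rightarrow> (nat \<Rightarrow> nat \<Rightarrow> real) \<Rightarrow> (nat \<Rightarrow> real) \<Rightarrow> real" where
  "ISO n A v = ising_expect n A (\<lambda>_. 0) (\<lambda>z. exp (- (\<Sum>j\<in>{1..n-1}. v j * z n * z j)))"

lemma simplex_ISO_eq_ISO: "simplex_ISO n A w = ISO n A (\<lambda>j. w j - w (n - 1 + j))"
  by (simp add: simplex_ISO_def ISO_def)

lemma finite_spins: "finite (spins n)"
  unfolding spins_def by (rule finite_PiE) auto

lemma ising_partition_pos: "0 < (\<Sum>z\<in>spins n. ising_weight n A \<theta> z)"
proof (rule sum_pos)
  show "spins n \<noteq> {}" unfolding spins_def by (simp add: PiE_eq_empty_iff)
qed (auto simp: finite_spins ising_weight_def)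

lemma ising_expect_add:
  "ising_expect n A \<theta> (\<lambda>z. f z + g z) = ising_expect n A \<theta> f + ising_expect n A \<theta> g"
  by (simp add: ising_expect_def distrib_left sum.distrib add_divide_distrib)

lemma ising_expect_mono:
  assumes "\<And>z. z \<in> spins n \<Longrightarrow> f z \<le> g z"
  shows "ising_expect n A \<theta> f \<le> ising_expect n A \<theta> g"
  unfolding ising_expect_def
  using assms ising_partition_pos[of n A \<theta>]
  by (intro divide_right_mono sum_mono mult_left_mono) (auto simp: ising_weight_def)

lemma sum_spins_odd_eq_0:
  fixes f :: "(nat \<Rightarrow> real) \<Rightarrow> real"
  assumes i: "i \<in> {1..n}" and odd: "\<And>z. f (z(i := - z i)) = - f z"
  shows "(\<Sum>z\<in>spins n. f z) = 0"
proof -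
  define flip where "flip z = z(i := - z i)" for z :: "nat \<Rightarrow> real"
  have "flip z \<in> spins n" if "z \<in> spins n" for z
    using that i unfolding spins_def flip_def PiE_def Pi_def extensional_def by auto
  moreover have "flip (flip z) = z" for z
    unfolding flip_def by auto
  ultimately have "bij_betw flip (spins n) (spins n)"
    by (intro bij_betw_byWitness[where f' = flip]) auto
  then have "(\<Sum>z\<in>spins n. f z) = (\<Sum>z\<in>spins n. f (flip z))"
    by (simp add: sum.reindex_bij_betw)
  also have "\<dots> = - (\<Sum>z\<in>spins n. f z)"
    by (simp add: flip_def odd sum_negf)
  finally show ?thesis by simp
qed

lemma ising_energy_split_last:
  fixes A :: "nat \<Rightarrow> nat \<Rightarrow> real"
  assumes sym: "\<forall>i\<in>{1..Suc m}. \<forall>j\<in>{1..Suc m}. A i j = A j i"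
  shows "(\<Sum>i\<in>{1..Suc m}. \<Sum>j\<in>{i<..Suc m}. A i j * z i * z j)
       = (\<Sum>i\<in>{1..m}. \<Sum>j\<in>{i<..m}. A i j * z i * z j)
         + (\<Sum>j\<in>{1..m}. A (Suc m) j * z (Suc m) * z j)"
proof -
  have "(\<Sum>j\<in>{i<..Suc m}. A i j * z i * z j)
      = (\<Sum>j\<in>{i<..m}. A i j * z i * z j) + A (Suc m) i * z (Suc m) * z i"
    if i: "i \<in> {1..m}" for i
  proof -
    have "{i<..Suc m} = insert (Suc m) {i<..m}" using i by auto
    moreover have "A i (Suc m) = A (Suc m) i" using sym i by auto
    ultimately show ?thesis by (simp add: mult_ac)
  qed
  then show ?thesis
    by (simp add: sum.cl_ivl_Suc sum.distrib)
qed

lemma ISO_score_vanishes: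
  fixes A :: "nat \<Rightarrow> nat \<Rightarrow> real" and c :: "nat \<Rightarrow> real"
  assumes sym: "\<forall>i\<in>{1..Suc m}. \<forall>j\<in>{1..Suc m}. A i j = A j i"
  shows "ising_expect (Suc m) A (\<lambda>_. 0)
           (\<lambda>z. exp (- (\<Sum>j\<in>{1..m}. A (Suc m) j * z (Suc m) * z j))
                * (\<Sum>j\<in>{1..m}. c j * z (Suc m) * z j)) = 0"
proof -
  define R where "R z = (\<Sum>i\<in>{1..m}. \<Sum>j\<in>{i<..m}. A i j * z i * z j)" for z :: "nat \<Rightarrow> real"
  define f where "f z = exp (R z) * (\<Sum>j\<in>{1..m}. c j * z (Suc m) * z j)" for z :: "nat \<Rightarrow> real"
  have tilted: "ising_weight (Suc m) A (\<lambda>_. 0) z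
      * (exp (- (\<Sum>j\<in>{1..m}. A (Suc m) j * z (Suc m) * z j))
         * (\<Sum>j\<in>{1..m}. c j * z (Suc m) * z j)) = f z" for z
    unfolding ising_weight_def ising_energy_split_last[OF sym] f_def R_def
    by (simp add: exp_add[symmetric])
  have "f (z(Suc m := - z (Suc m))) = - f z" for z
  proof -
    have "R (z(Suc m := - z (Suc m))) = R z"
      unfolding R_def by (intro sum.cong) auto
    then show ?thesis
      unfolding f_def by (simp add: sum_negf)
  qed
  then have "(\<Sum>z\<in>spins (Suc m). f z) = 0"
    by (intro sum_spins_odd_eq_0[of "Suc m"]) auto
  then show ?thesis
    unfolding ising_expect_def tilted by simp
qed

lemma ISO_cong:
  assumes "\<forall>j\<in>{1..n-1}. u j = v j"
  shows "ISO n A u = ISO n A v"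
proof -
  have "(\<Sum>j\<in>{1..n-1}. u j * z n * z j) = (\<Sum>j\<in>{1..n-1}. v j * z n * z j)" for z
    using assms by (intro sum.cong) auto
  then show ?thesis
    by (simp add: ISO_def)
qed

lemma ISO_minimal_at_couplings:
  fixes A :: "nat \<Rightarrow> nat \<Rightarrow> real" and v :: "nat \<Rightarrow> real"
  assumes sym: "\<forall>i\<in>{1..Suc m}. \<forall>j\<in>{1..Suc m}. A i j = A j i"
  shows "ISO (Suc m) A (A (Suc m)) \<le> ISO (Suc m) A v"
proof -
  define E where "E u z = - (\<Sum>j\<in>{1..m}. u j * z (Suc m) * z j)"
    for u z :: "nat \<Rightarrow> real"
  define dE where "dE z = (\<Sum>j\<in>{1..m}. (A (Suc m) j - v j) * z (Suc m) * z j)"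
    for z :: "nat \<Rightarrow> real"
  have tangent: "exp (E (A (Suc m)) z) + exp (E (A (Suc m)) z) * dE z \<le> exp (E v z)" for z
  proof -
    have "E v z - E (A (Suc m)) z = dE z"
      unfolding E_def dE_def by (simp add: sum_subtractf[symmetric] left_diff_distrib)
    moreover have "exp (E (A (Suc m)) z) * (1 + (E v z - E (A (Suc m)) z))
        \<le> exp (E (A (Suc m)) z) * exp (E v z - E (A (Suc m)) z)"
      by (intro mult_left_mono) auto
    ultimately show ?thesis
      by (simp add: exp_add algebra_simps)
  qed
  have "ISO (Suc m) A (A (Suc m))
      = ising_expect (Suc m) A (\<lambda>_. 0) (\<lambda>z. exp (E (A (Suc m)) z))
        + ising_expect (Suc m) A (\<lambda>_. 0) (\<lambda>z. exp (E (A (Suc m)) z) * dE z)"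
    using ISO_score_vanishes[OF sym] by (simp add: ISO_def E_def dE_def)
  also have "\<dots> \<le> ISO (Suc m) A v"
    unfolding ising_expect_add[symmetric] ISO_def
    using tangent by (intro ising_expect_mono) (simp add: E_def)
  finally show ?thesis .
qed

lemma simplex_ISO_partial_deriv:
  fixes A :: "nat \<Rightarrow> nat \<Rightarrow> real" and w :: "nat \<Rightarrow> real"
  shows "((\<lambda>t. simplex_ISO (Suc m) A (w(k := t))) has_real_derivative
     ising_expect (Suc m) A (\<lambda>_. 0)
       (\<lambda>z. exp (- (\<Sum>j\<in>{1..m}. (w j - w (m + j)) * z (Suc m) * z j))
         * (\<Sum>j\<in>{1..m}. ((if m + j = k then 1 else 0) - (if j = k then 1 else 0)) * z (Suc m) * z j)))
     (at (w k))"
proof -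
  define E where "E u z = - (\<Sum>j\<in>{1..m}. (u j - u (m + j)) * z (Suc m) * z j)"
    for u z :: "nat \<Rightarrow> real"
  define dE where "dE z = (\<Sum>j\<in>{1..m}. ((if m + j = k then 1 else 0) - (if j = k then 1 else 0)) * z (Suc m) * z j)"
    for z :: "nat \<Rightarrow> real"
  have coord: "((\<lambda>t. (w(k := t)) j) has_real_derivative (if j = k then 1 else 0)) (at x)" for j x
    by (cases "j = k") (auto intro: derivative_eq_intros)
  have "((\<lambda>t. E (w(k := t)) z) has_real_derivative dE z) (at (w k))" for z
    unfolding E_def dE_def
    by (rule derivative_eq_intros coord refl)+ (simp add: sum_negf[symmetric] algebra_simps)
  then have "((\<lambda>t. \<Sum>z\<in>spins (Suc m). ising_weight (Suc m) A (\<lambda>_. 0) z * exp (E (w(k := t)) z))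
      has_real_derivative (\<Sum>z\<in>spins (Suc m). ising_weight (Suc m) A (\<lambda>_. 0) z * (exp (E w z) * dE z)))
      (at (w k))"
    by (auto intro!: derivative_eq_intros simp: mult_ac)
  from DERIV_cdivide[OF this] show ?thesis
    by (simp add: simplex_ISO_def ising_expect_def E_def dE_def)
qed

lemma simplex_ISO_stationary:
  fixes A :: "nat \<Rightarrow> nat \<Rightarrow> real" and w :: "nat \<Rightarrow> real"
  assumes sym: "\<forall>i\<in>{1..Suc m}. \<forall>j\<in>{1..Suc m}. A i j = A j i"
    and w: "\<forall>j\<in>{1..m}. w j - w (m + j) = A (Suc m) j"
  shows "((\<lambda>t. simplex_ISO (Suc m) A (w(k := t))) has_real_derivative 0) (at (w k))"
proof -
  have "(\<Sum>j\<in>{1..m}. (w j - w (m + j)) * z (Suc m) * z j)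
      = (\<Sum>j\<in>{1..m}. A (Suc m) j * z (Suc m) * z j)" for z
    using w by (intro sum.cong) auto
  then show ?thesis
    using simplex_ISO_partial_deriv[of m A w k] ISO_score_vanishes[OF sym] by simp
qed

lemma Pi_B_Delta_diff:
  assumes "j \<in> {1..k}"
  shows "Pi_B_Delta k W x j - Pi_B_Delta k W x (k + j) = x j"
  using assms by (auto simp: Pi_B_Delta_def)

lemma Pi_B_Delta_in_simplexW:
  assumes "(\<Sum>j\<in>{1..k}. \<bar>x j\<bar>) \<le> W"
  shows "Pi_B_Delta k W x \<in> simplexW W (2*k + 1)"
proof -
  define u where "u = Pi_B_Delta k W x"
  have "(\<Sum>i\<in>{1..2*k + 1}. u i) = (\<Sum>i\<in>{1..k + k}. u i) + u (2*k + 1)"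
    by (simp add: mult_2)
  also have "(\<Sum>i\<in>{1..k + k}. u i) = (\<Sum>j\<in>{1..k}. u j) + (\<Sum>i\<in>{1 + k..k + k}. u i)"
    using sum.ub_add_nat[of 1 k u k] by simp
  also have "(\<Sum>i\<in>{1 + k..k + k}. u i) = (\<Sum>j\<in>{1..k}. u (k + j))"
    using sum.shift_bounds_cl_nat_ivl[of u 1 k k] by (simp add: add.commute)
  also have "(\<Sum>j\<in>{1..k}. u j) + (\<Sum>j\<in>{1..k}. u (k + j)) = (\<Sum>j\<in>{1..k}. \<bar>x j\<bar>)"
    unfolding sum.distrib[symmetric] by (intro sum.cong) (auto simp: u_def Pi_B_Delta_def)
  finally have "(\<Sum>i\<in>{1..2*k + 1}. u i) = W"
    by (simp add: u_def Pi_B_Delta_def)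
  moreover have "0 \<le> u i" if "i \<in> {1..2*k + 1}" for i
    using that assms by (auto simp: u_def Pi_B_Delta_def)
  moreover have "u i = 0" if "i \<notin> {1..2*k + 1}" for i
    using that by (auto simp: u_def Pi_B_Delta_def)
  ultimately show ?thesis
    by (simp add: simplexW_def u_def)
qed

theorem mainTheorem4:
  fixes n :: nat and A :: "nat \<Rightarrow> nat \<Rightarrow> real" and lam :: real
    and vstar wstar :: "nat \<Rightarrow> real"
  assumes "n \<ge> 2"
    and "\<forall>i\<in>{1..n}. \<forall>j\<in>{1..n}. A i j = A j i"
    and "\<forall>i\<in>{1..n}. A i i = 0"
    and "\<forall>i\<in>{1..n}. (\<Sum>j\<in>{1..n}. \<bar>A i j\<bar>) \<le> lam"
    and "vstar = (\<lambda>i. if i \<in> {1..n-1} then A n i else 0)"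
    and "wstar = Pi_B_Delta (n - 1) lam vstar"
  shows "wstar \<in> simplexW lam (2*n - 1)
    \<and> (\<forall>k\<in>{1..2*n-1}. ((\<lambda>t. simplex_ISO n A (wstar(k := t))) has_real_derivative 0) (at (wstar k)))
    \<and> (\<forall>w\<in>simplexW lam (2*n - 1). simplex_ISO n A wstar \<le> simplex_ISO n A w)"
proof -
  obtain m where n: "n = Suc m" using assms(1) by (cases n) auto
  have sym: "\<forall>i\<in>{1..Suc m}. \<forall>j\<in>{1..Suc m}. A i j = A j i"
    using assms(2) n by simp
  have "(\<Sum>j\<in>{1..m}. \<bar>vstar j\<bar>) = (\<Sum>j\<in>{1..n}. \<bar>A n j\<bar>)"
    using assms(3,5) n by (simp add: sum.cl_ivl_Suc)
  also have "\<dots> \<le> lam"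
    using assms(4) n by simp
  finally have "(\<Sum>j\<in>{1..m}. \<bar>vstar j\<bar>) \<le> lam" .
  then have simplex: "wstar \<in> simplexW lam (2*n - 1)"
    using Pi_B_Delta_in_simplexW[where k = m] assms(6) n by simp
  have diff: "\<forall>j\<in>{1..m}. wstar j - wstar (m + j) = A (Suc m) j"
    using Pi_B_Delta_diff[where k = m and W = lam and x = vstar] assms(5,6) n by simp
  have "\<forall>w\<in>simplexW lam (2*n - 1). simplex_ISO n A wstar \<le> simplex_ISO n A w"
    using ISO_cong[of n "\<lambda>j. wstar j - wstar (n - 1 + j)" "A n"] diff
      ISO_minimal_at_couplings[OF sym] n
    by (simp add: simplex_ISO_eq_ISO)
  then show ?thesis
    using simplex simplex_ISO_stationary[OF sym diff] n by simp
qed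

end
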